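(* If $(a_0,a_1,\cdots,a_{k-1})\neq0$, then \[{\rm rk}(B_{\vec a})\geq \frac{m}{e}-2(k-1).\]
   Context: Let $m,n,d,e$ be fixed positive integers such that $m=2n$, $e=\gcd(n,d)=\gcd(m,d)$, and $1\leq k\leq \frac{n}{e}$. For $\vec a=(a_0,a_1,\cdots,a_k)\in\mathbb{F}_{2^{n}}\times\mathbb{F}_{2^m}^k$, define the quadratic form on the $\mathbb{F}_{2^e}$-vector space $\mathbb{F}_{2^m}$ \[Q_{\vec a}(x)={\rm Tr}_{\mathbb{F}_{2^{n}}/\mathbb{F}_{2^e}}(a_0x^{2^{\frac{nd}{e}}+1})+\sum_{j=1}^{k-1}{\rm Tr}_{\mathbb{F}_{2^{m}}/\mathbb{F}_{2^e}}(a_jx^{2^{(\frac{n}{e}-j)d}+1})+{\rm Tr}_{\mathbb{F}_{2^{m}}/\mathbb{F}_{2^e}}(a_kx),\] and the associated $\mathbb{F}_{2^e}$-bilinear form $B_{\vec a}(x,y)=Q_{\vec a}(x+y)-Q_{\vec a}(x)-Q_{\vec a}(y)$, i.e. \[B_{\vec a}(x,y)={\rm Tr}_{\mathbb{F}_{2^{n}}/\mathbb{F}_{2^e}}(a_0(xy^{2^{\frac{nd}{e}}}+x^{2^{\frac{nd}{e}}}y))+\sum_{j=1}^{k-1}{\rm Tr}_{\mathbb{F}_{2^{m}}/\mathbb{F}_{2^e}}(a_j(xy^{2^{(\frac{n}{e}-j)d}}+x^{2^{(\frac{n}{e}-j)d}}y)).\] ${\rm rk}(B_{\vec a})$ denotes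 the rank of $B_{\vec a}$ as a bilinear form over $\mathbb{F}_{2^e}$ on $\mathbb{F}_{2^m}$, i.e. $\frac{m}{e}-\dim_{\mathbb{F}_{2^e}}{\rm Rad}(B_{\vec a})$, where ${\rm Rad}(B_{\vec a})=\{x\in\mathbb{F}_{2^m}\mid B_{\vec a}(x,y)=0~\forall y\in\mathbb{F}_{2^m}\}$. *)

theory Defs
  imports Main
begin

text \<open>The field F_{2^m} is modelled as a finite field type 'a of characteristic 2
with 2^m elements; F_{2^t} (t dividing m) is the subfield {x. x^(2^t) = x}.\<close>

definition subfield_elems :: "nat \<Rightarrow> 'a::field set" where
  "subfield_elems t = {x. x ^ (2 ^ t) = x}"

definition rel_trace :: "nat \<Rightarrow> nat \<Rightarrow> 'a::field \<Rightarrow> 'a" where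
  "rel_trace N e y = (\<Sum>i<N div e. y ^ (2 ^ (e * i)))"

definition Bform :: "nat \<Rightarrow> nat \<Rightarrow> nat \<Rightarrow> nat \<Rightarrow> nat \<Rightarrow> (nat \<Rightarrow> 'a::field) \<Rightarrow> 'a \<Rightarrow> 'a \<Rightarrow> 'a" where
  "Bform m n d e k a x y =
     rel_trace n e (a 0 * (x * y ^ (2 ^ (n * d div e)) + x ^ (2 ^ (n * d div e)) * y))
     + (\<Sum>j\<in>{1..<k}. rel_trace m e (a j * (x * y ^ (2 ^ ((n div e - j) * d))
                                              + x ^ (2 ^ ((n div e - j) * d)) * y)))"

definition Rad :: "('a \<Rightarrow> 'a \<Rightarrow> 'a::field) \<Rightarrow> 'a set" where
  "Rad B = {x. \<forall>y. B x y = 0}"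

definition span_over :: "'a::field set \<Rightarrow> 'a set \<Rightarrow> 'a set" where
  "span_over K S = {v. \<exists>c. (\<forall>s\<in>S. c s \<in> K) \<and> v = (\<Sum>s\<in>S. c s * s)}"

definition dim_over :: "'a::field set \<Rightarrow> 'a set \<Rightarrow> nat" where
  "dim_over K V = (LEAST r. \<exists>S. finite S \<and> S \<subseteq> V \<and> card S = r \<and> V \<subseteq> span_over K S)"

definition rk_over :: "nat \<Rightarrow> nat \<Rightarrow> ('a \<Rightarrow> 'a \<Rightarrow> 'a::field) \<Rightarrow> nat" where
  "rk_over m e B = m div e - dim_over (subfield_elems e) (Rad B)"

end

theory Submission
  imports Defs "HOL-Computational_Algebra.Polynomial"
begin

text \<open>
  By nondegeneracy of the trace, B(x, y) = Tr(L(x) y) for the F_{2^e}-linear map L obtained by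
  moving every Frobenius twist from y onto x, so Rad B = ker L. After a Frobenius shift of the
  argument, L is a linearized polynomial of degree 2(k - 1) in \<sigma> = frob d with a nonzero
  coefficient. Such a polynomial has at most q^(2(k - 1)) roots, q = 2^e: at a nonzero root v,
  y \<mapsto> L(v y) is a polynomial of one degree less composed with \<sigma> - 1, whose kernel is the
  fixed field F_{2^e} of \<sigma> (as gcd d m = e). Finally, an F_{2^e}-subspace with at most q^r
  elements has dimension at most r.
\<close>

section \<open>Frobenius powers in characteristic 2\<close>

definition frob :: "nat \<Rightarrow> 'a::field \<Rightarrow> 'a" where
  "frob t x = x ^ 2 ^ t"

lemma frob_0 [simp]: "frob 0 x = x"
  and frob_zero [simp]: "frob t 0 = 0"
  and frob_eq_0_iff [simp]: "frob t x = 0 \<longleftrightarrow> x = 0"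
  by (simp_all add: frob_def)

lemma frob_mult: "frob t (x * y) = frob t x * frob t y"
  by (simp add: frob_def power_mult_distrib)

lemma frob_frob: "frob s (frob t x) = frob (s + t) x"
  by (simp add: frob_def power_mult[symmetric] power_add mult.commute)

lemma frob_Suc: "frob (Suc t) x = (frob t x)\<^sup>2"
  by (simp add: frob_def power_mult[symmetric] mult.commute)

lemma char2_minus_eq_add: "(2::'a::ring_1) = 0 \<Longrightarrow> (x::'a) - y = x + y"
  by (metis mult_2 mult_zero_left
        diff_conv_add_uminus neg_eq_iff_add_eq_0)

lemma frob_add:
  assumes "(2::'a::field) = 0"
  shows "frob t (x + y) = frob t x + frob t (y::'a)"
proof (induction t)
  case (Suc t)
  have "(u + v)\<^sup>2 = u\<^sup>2 + v\<^sup>2" for u v :: 'a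
    using assms by (simp add: power2_sum)
  with Suc show ?case by (simp add: frob_Suc)
qed simp

lemma frob_diff:
  assumes "(2::'a::field) = 0"
  shows "frob t (x - y) = frob t x - frob t (y::'a)"
  using frob_add[OF assms] char2_minus_eq_add[OF assms] by metis

lemma frob_inj:
  assumes "(2::'a::field) = 0" and "frob t x = frob t (y::'a)"
  shows "x = y"
  using assms frob_diff[OF assms(1), of t x y] by simp

lemma finite_field_power_card: "x ^ card (UNIV :: 'a set) = (x::'a::{field,finite})"
proof -
  let ?U = "UNIV - {0::'a}"
  have card_UNIV: "card (UNIV :: 'a set) = Suc (card ?U)"
    using card_Suc_Diff1[of "UNIV :: 'a set" 0] by simp
  have "x ^ card ?U = 1" if "x \<noteq> 0"
  proof -
    have "bij_betw (\<lambda>y. x * y) ?U ?U"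
      by (rule bij_betw_byWitness[where f' = "\<lambda>y. y / x"]) (use that in auto)
    then have "(\<Prod>y\<in>?U. x * y) = (\<Prod>y\<in>?U. y)"
      by (rule prod.reindex_bij_betw)
    then have "x ^ card ?U * (\<Prod>y\<in>?U. y) = 1 * (\<Prod>y\<in>?U. y)"
      by (simp add: prod.distrib)
    then show ?thesis
      by (rule mult_right_cancel[THEN iffD1, rotated]) simp
  qed
  then show ?thesis
    unfolding card_UNIV by (cases "x = 0") simp_all
qed

lemma frob_fixed_mult: "frob t c = c \<Longrightarrow> frob (t * s) c = c"
  by (induction s) (simp_all add: frob_frob[symmetric])

lemma frob_fixed_dvd: "frob t c = c \<Longrightarrow> t dvd s \<Longrightarrow> frob s c = c"
  by (metis dvdE frob_fixed_mult)

lemma frob_fixed_gcd: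
  assumes "s \<noteq> 0" and "frob s y = y" and "frob t y = y"
  shows "frob (gcd s t) y = y"
proof -
  obtain u v where "s * u = t * v + gcd s t"
    using bezout_nat[OF assms(1)] by blast
  then have "y = frob (gcd s t) (frob (t * v) y)"
    using frob_fixed_mult[OF assms(2), of u] by (simp add: frob_frob add.commute)
  then show ?thesis
    using frob_fixed_mult[OF assms(3)] by simp
qed

lemma frob_eq_self_if_card_eq: "card (UNIV :: 'a set) = 2 ^ m \<Longrightarrow> frob m (x::'a::{field,finite}) = x"
  using finite_field_power_card[of x] by (simp add: frob_def)

lemma frob_periodic:
  "card (UNIV :: 'a set) = 2 ^ m \<Longrightarrow> m dvd s \<Longrightarrow> frob s (x::'a::{field,finite}) = x"
  by (rule frob_fixed_dvd[OF frob_eq_self_if_card_eq])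

section \<open>The relative trace\<close>

lemma rel_trace_eq_sum_frob: "rel_trace N e y = (\<Sum>i<N div e. frob (e * i) y)"
  by (simp add: rel_trace_def frob_def)

lemma rel_trace_zero [simp]: "rel_trace N e 0 = 0"
  by (simp add: rel_trace_eq_sum_frob)

lemma rel_trace_add:
  "(2::'a::field) = 0 \<Longrightarrow> rel_trace N e (y + z) = rel_trace N e y + rel_trace N e (z::'a)"
  by (simp add: rel_trace_eq_sum_frob frob_add sum.distrib)

lemma rel_trace_sum:
  assumes "(2::'a::field) = 0"
  shows "rel_trace N e (\<Sum>j\<in>J. f j) = (\<Sum>j\<in>J. rel_trace N e (f j::'a))"
  by (induction J rule: infinite_finite_induct)
    (simp_all add: rel_trace_add[OF assms])

lemma rel_trace_frob:
  fixes z :: "'a::{field,finite}"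
  assumes "card (UNIV :: 'a set) = 2 ^ m" and "e dvd m"
  shows "rel_trace m e (frob (e * t) z) = rel_trace m e z"
proof (induction t)
  case (Suc t)
  let ?M = "m div e" and ?g = "\<lambda>i. frob (e * i) (frob (e * t) z)"
  have "?g ?M = ?g 0"
    using assms by (simp add: frob_eq_self_if_card_eq)
  then have "(\<Sum>i<?M. ?g (Suc i)) = (\<Sum>i<?M. ?g i)"
    using sum.lessThan_Suc_shift[of ?g ?M] by simp
  moreover have "?g (Suc i) = frob (e * i) (frob (e * Suc t) z)" for i
    by (simp add: frob_frob algebra_simps)
  ultimately show ?case
    using Suc by (simp add: rel_trace_eq_sum_frob)
qed simp

lemma rel_trace_double:
  fixes w :: "'a::field"
  assumes "(2::'a) = 0" and "e dvd n"
  shows "rel_trace (2 * n) e w = rel_trace n e (w + frob n w)"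
proof -
  let ?N = "n div e" and ?g = "\<lambda>i. frob (e * i) w"
  have "(\<Sum>i<2 * n div e. ?g i) = (\<Sum>i\<in>{0..<?N}. ?g i) + (\<Sum>i\<in>{?N..<?N + ?N}. ?g i)"
    using assms(2) sum.atLeastLessThan_concat[of 0 ?N "?N + ?N" ?g]
    by (simp add: atLeast0LessThan mult_2)
  also have "(\<Sum>i\<in>{?N..<?N + ?N}. ?g i) = (\<Sum>i<?N. frob (e * i) (frob n w))"
    using sum.shift_bounds_nat_ivl[of ?g 0 ?N ?N] assms(2)
    by (simp add: atLeast0LessThan frob_frob algebra_simps)
  finally show ?thesis
    by (simp add: rel_trace_eq_sum_frob frob_add[OF assms(1)] sum.distrib atLeast0LessThan)
qed

lemma rel_trace_frob_adjoint:
  fixes b y :: "'a::{field,finite}"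
  assumes "card (UNIV :: 'a set) = 2 ^ m" and "e dvd m" and "e dvd s" and "m dvd s + t"
  shows "rel_trace m e (b * frob t y) = rel_trace m e (frob s b * y)"
proof -
  have "rel_trace m e (b * frob t y) = rel_trace m e (frob s (b * frob t y))"
    using rel_trace_frob[OF assms(1,2), of "s div e"] assms(3) by simp
  also have "frob s (b * frob t y) = frob s b * y"
    using frob_periodic[OF assms(1,4)] by (simp add: frob_mult frob_frob)
  finally show ?thesis .
qed

lemma rel_trace_not_identically_zero:
  assumes "card (UNIV :: 'a::{field,finite} set) = 2 ^ m" and "e dvd m" and "0 < e" and "0 < m"
  shows "\<exists>w::'a. rel_trace m e w \<noteq> 0"
proof (rule ccontr)
  assume zero: "\<not> (\<exists>w::'a. rel_trace m e w \<noteq> 0)"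
  let ?M = "m div e"
  define p :: "'a poly" where "p = (\<Sum>i<?M. monom 1 (2 ^ (e * i)))"
  have roots: "{w. poly p w = 0} = UNIV"
    using zero by (auto simp: p_def poly_sum poly_monom rel_trace_def)
  have M_pos: "?M > 0" and eM: "e * ?M = m"
    using assms by (auto simp: dvd_div_eq_0_iff)
  have "coeff p (2 ^ (e * (?M - 1))) = (\<Sum>i<?M. if i = ?M - 1 then 1 else 0)"
    unfolding p_def coeff_sum using \<open>0 < e\<close> by (intro sum.cong) auto
  then have "p \<noteq> 0"
    using M_pos by auto
  have "degree p \<le> 2 ^ (e * (?M - 1))"
    unfolding p_def
    by (intro degree_sum_le order_trans[OF degree_monom_le] power_increasing) auto
  also have "\<dots> < 2 ^ m"
    using M_pos \<open>0 < e\<close> \<open>0 < m\<close> eM by (simp add: diff_mult_distrib2)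
  finally have "degree p < card (UNIV :: 'a set)"
    using assms(1) by simp
  moreover have "card (UNIV :: 'a set) \<le> degree p"
    using card_poly_roots_bound[OF \<open>p \<noteq> 0\<close>] roots by simp
  ultimately show False
    by simp
qed

lemma rel_trace_nondegenerate:
  fixes z :: "'a::{field,finite}"
  assumes "card (UNIV :: 'a set) = 2 ^ m" and "e dvd m" and "0 < e" and "0 < m"
    and "\<And>y. rel_trace m e (z * y) = 0"
  shows "z = 0"
proof (rule ccontr)
  assume "z \<noteq> 0"
  obtain w :: 'a where "rel_trace m e w \<noteq> 0"
    using rel_trace_not_identically_zero[OF assms(1-4)] by blast
  with \<open>z \<noteq> 0\<close> assms(5)[of "w / z"] show False
    by simp
qed

section \<open>Roots of linearized polynomials\<close>

lemma card_additive_preimage_le: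
  fixes g :: "'a::{ab_group_add,finite} \<Rightarrow> 'b::ab_group_add"
  assumes diff: "\<And>x y. g (x - y) = g x - g y" and kernel: "\<And>y. g y = 0 \<Longrightarrow> y \<in> K"
    and "finite W"
  shows "card {y. g y \<in> W} \<le> card K * card W"
proof -
  have fibre: "card {y. g y = w} \<le> card K" for w
  proof (cases "\<exists>y0. g y0 = w")
    case True
    then obtain y0 where y0: "g y0 = w"
      by blast
    have "y \<in> (\<lambda>k. y0 + k) ` K" if "g y = w" for y
    proof
      show "y - y0 \<in> K"
        using that y0 by (intro kernel) (simp add: diff)
    qed simp
    then have "card {y. g y = w} \<le> card ((\<lambda>k. y0 + k) ` K)"
      by (intro card_mono) auto
    also have "\<dots> \<le> card K"
      by (rule card_image_le) simp
    finally show ?thesis .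
  qed simp
  have "{y. g y \<in> W} = (\<Union>w\<in>W. {y. g y = w})"
    by blast
  then have "card {y. g y \<in> W} \<le> (\<Sum>w\<in>W. card {y. g y = w})"
    using card_UN_le[OF \<open>finite W\<close>, of "\<lambda>w. {y. g y = w}"] by simp
  also have "\<dots> \<le> card K * card W"
    using sum_mono[of W "\<lambda>w. card {y. g y = w}" "\<lambda>_. card K", OF fibre] by (simp add: mult.commute)
  finally show ?thesis .
qed

definition frob_poly :: "nat \<Rightarrow> nat \<Rightarrow> (nat \<Rightarrow> 'a) \<Rightarrow> 'a \<Rightarrow> 'a::field" where
  "frob_poly d r c x = (\<Sum>i\<le>r. c i * frob (d * i) x)"

lemma eq_0_if_tail_sums_eq_0:
  fixes f :: "nat \<Rightarrow> 'a::ab_group_add"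
  assumes total: "(\<Sum>i\<le>R. f i) = 0" and tails: "\<And>j. j < R \<Longrightarrow> (\<Sum>i\<in>{Suc j..R}. f i) = 0"
    and "i \<le> R"
  shows "f i = 0"
proof -
  have tail_step: "(\<Sum>i\<in>{j..R}. f i) = f j + (\<Sum>i\<in>{Suc j..R}. f i)" if "j \<le> R" for j
    using that by (simp add: sum.atLeast_Suc_atMost)
  have tail_0: "(\<Sum>i\<in>{j..R}. f i) = 0" if "j \<le> R" for j
  proof (cases j)
    case 0
    then show ?thesis
      using total by (simp add: atLeast0AtMost)
  next
    case (Suc j')
    then show ?thesis
      using tails[of j'] that by simp
  qed
  show ?thesis
  proof (cases "i = R")
    case True
    then show ?thesis
      using tail_0[of R] by simp
  next
    case False
    then show ?thesis
      using tail_step[of i] tail_0[of i] tails[of i] \<open>i \<le> R\<close> by simp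
  qed
qed

definition root_quotient_coeff :: "nat \<Rightarrow> nat \<Rightarrow> (nat \<Rightarrow> 'a) \<Rightarrow> 'a \<Rightarrow> nat \<Rightarrow> 'a::field" where
  "root_quotient_coeff d r c v j = (\<Sum>i\<in>{Suc j..Suc r}. c i * frob (d * i) v)"

lemma frob_poly_factor:
  fixes c :: "nat \<Rightarrow> 'a::field"
  assumes char2: "(2::'a) = 0" and root: "frob_poly d (Suc r) c v = 0"
  shows "frob_poly d (Suc r) c (v * y) = frob_poly d r (root_quotient_coeff d r c v) (frob d y - y)"
proof -
  define b where "b i = c i * frob (d * i) v" for i
  have telescope: "frob (d * i) y - y = (\<Sum>j<i. frob (d * j) (frob d y - y))" for i
  proof -
    have "frob (d * i) y - y = (\<Sum>j<i. frob (d * Suc j) y - frob (d * j) y)"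
      by (subst sum_lessThan_telescope[of "\<lambda>j. frob (d * j) y"]) simp
    then show ?thesis
      by (simp add: frob_diff[OF char2] frob_frob add.commute)
  qed
  have "frob_poly d (Suc r) c (v * y) = (\<Sum>i\<le>Suc r. b i * frob (d * i) y) - (\<Sum>i\<le>Suc r. b i) * y"
    using root by (simp add: frob_poly_def b_def frob_mult mult.assoc)
  also have "\<dots> = (\<Sum>i\<le>Suc r. b i * (frob (d * i) y - y))"
    by (simp only: sum_distrib_right right_diff_distrib sum_subtractf)
  also have "\<dots> = (\<Sum>i\<le>Suc r. \<Sum>j<i. b i * frob (d * j) (frob d y - y))"
    by (simp only: telescope sum_distrib_left)
  also have "\<dots> = (\<Sum>j<Suc r. \<Sum>i\<in>{Suc j..Suc r}. b i * frob (d * j) (frob d y - y))"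
    by (rule sum.nested_swap')
  finally show ?thesis
    by (simp only: frob_poly_def root_quotient_coeff_def b_def sum_distrib_right lessThan_Suc_atMost)
qed

lemma root_quotient_coeff_nonzero:
  fixes c :: "nat \<Rightarrow> 'a::field"
  assumes "v \<noteq> 0" and root: "frob_poly d (Suc r) c v = 0" and "\<exists>i\<le>Suc r. c i \<noteq> 0"
  shows "\<exists>j\<le>r. root_quotient_coeff d r c v j \<noteq> 0"
proof (rule ccontr)
  assume "\<not> (\<exists>j\<le>r. root_quotient_coeff d r c v j \<noteq> 0)"
  then have "(\<Sum>i\<in>{Suc j..Suc r}. c i * frob (d * i) v) = 0" if "j < Suc r" for j
    using that by (simp add: root_quotient_coeff_def)
  then have "c i * frob (d * i) v = 0" if "i \<le> Suc r" for i
    using eq_0_if_tail_sums_eq_0 root that unfolding frob_poly_def by blast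
  then show False
    using assms(1,3) by auto
qed

lemma card_frob_poly_roots_le_quotient:
  fixes c :: "nat \<Rightarrow> 'a::{field,finite}"
  assumes char2: "(2::'a) = 0" and fixed: "\<And>y::'a. frob d y = y \<Longrightarrow> y \<in> K"
    and "v \<noteq> 0" and root: "frob_poly d (Suc r) c v = 0"
  shows "card {x. frob_poly d (Suc r) c x = 0}
    \<le> card K * card {z. frob_poly d r (root_quotient_coeff d r c v) z = 0}"
proof -
  let ?Z = "{z. frob_poly d r (root_quotient_coeff d r c v) z = 0}"
  have roots_sub: "{x. frob_poly d (Suc r) c x = 0} \<subseteq> (\<lambda>y. v * y) ` {y. frob d y - y \<in> ?Z}"
  proof
    fix x
    assume "x \<in> {x. frob_poly d (Suc r) c x = 0}"
    then have "frob_poly d (Suc r) c (v * (x / v)) = 0"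
      using \<open>v \<noteq> 0\<close> by simp
    then have "frob d (x / v) - x / v \<in> ?Z"
      unfolding frob_poly_factor[OF char2 root] by simp
    then show "x \<in> (\<lambda>y. v * y) ` {y. frob d y - y \<in> ?Z}"
      using \<open>v \<noteq> 0\<close> by (intro image_eqI[where x = "x / v"]) simp_all
  qed
  have "card {x. frob_poly d (Suc r) c x = 0} \<le> card {y. frob d y - y \<in> ?Z}"
    using card_mono[OF finite roots_sub] card_image_le[OF finite] by (rule order_trans)
  also have "\<dots> \<le> card K * card ?Z"
  proof (rule card_additive_preimage_le)
    show "frob d (x - y) - (x - y) = (frob d x - x) - (frob d y - y)" for x y :: 'a
      by (simp add: frob_diff[OF char2])
    show "y \<in> K" if "frob d y - y = 0" for y :: 'a
      using that fixed by simp
  qed simp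
  finally show ?thesis .
qed

lemma card_frob_poly_roots_le:
  fixes c :: "nat \<Rightarrow> 'a::{field,finite}"
  assumes char2: "(2::'a) = 0" and fixed: "\<And>y::'a. frob d y = y \<Longrightarrow> y \<in> K"
    and "\<exists>i\<le>r. c i \<noteq> 0"
  shows "card {x. frob_poly d r c x = 0} \<le> card K ^ r"
  using assms(3)
proof (induction r arbitrary: c)
  case 0
  then have "{x. frob_poly d 0 c x = 0} = {0}"
    by (auto simp: frob_poly_def)
  then show ?case
    by simp
next
  case (Suc r)
  show ?case
  proof (cases "\<exists>v. v \<noteq> 0 \<and> frob_poly d (Suc r) c v = 0")
    case False
    then have "card {x. frob_poly d (Suc r) c x = 0} \<le> card {0::'a}"
      by (intro card_mono) auto
    also have "\<dots> \<le> card K ^ Suc r"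
      using fixed[of 0] by (auto simp: Suc_le_eq card_gt_0_iff)
    finally show ?thesis .
  next
    case True
    then obtain v where v: "v \<noteq> 0" "frob_poly d (Suc r) c v = 0"
      by blast
    have "card {x. frob_poly d (Suc r) c x = 0}
        \<le> card K * card {z. frob_poly d r (root_quotient_coeff d r c v) z = 0}"
      by (rule card_frob_poly_roots_le_quotient[OF char2 fixed v])
    also have "\<dots> \<le> card K * card K ^ r"
      using Suc.IH[OF root_quotient_coeff_nonzero[OF v Suc.prems]] by simp
    finally show ?thesis
      by simp
  qed
qed

section \<open>Dimension over a subfield\<close>

locale subfield_set =
  fixes K :: "'a::{field,finite} set"
  assumes zero_mem: "0 \<in> K" and one_mem: "1 \<in> K"
    and diff_mem: "\<And>a b. a \<in> K \<Longrightarrow> b \<in> K \<Longrightarrow> a - b \<in> K"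
    and mult_mem: "\<And>a b. a \<in> K \<Longrightarrow> b \<in> K \<Longrightarrow> a * b \<in> K"
    and inverse_mem: "\<And>a. a \<in> K \<Longrightarrow> inverse a \<in> K"
begin

lemma span_over_diff:
  assumes "u \<in> span_over K S" and "w \<in> span_over K S"
  shows "u - w \<in> span_over K S"
proof -
  obtain c c' where "\<forall>s\<in>S. c s \<in> K" "u = (\<Sum>s\<in>S. c s * s)"
    and "\<forall>s\<in>S. c' s \<in> K" "w = (\<Sum>s\<in>S. c' s * s)"
    using assms unfolding span_over_def by blast
  then show ?thesis
    unfolding span_over_def using diff_mem
    by (intro CollectI exI[of _ "\<lambda>s. c s - c' s"]) (simp add: sum_subtractf left_diff_distrib)
qed

lemma span_over_scale:
  assumes "u \<in> span_over K S" and "k \<in> K"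
  shows "k * u \<in> span_over K S"
proof -
  obtain c where "\<forall>s\<in>S. c s \<in> K" "u = (\<Sum>s\<in>S. c s * s)"
    using assms(1) unfolding span_over_def by blast
  then show ?thesis
    unfolding span_over_def using assms(2) mult_mem
    by (intro CollectI exI[of _ "\<lambda>s. k * c s"]) (simp add: sum_distrib_left mult.assoc)
qed

lemma span_over_insert:
  assumes "finite S" and "v \<notin> S" and "u \<in> span_over K S" and "k \<in> K"
  shows "u + k * v \<in> span_over K (insert v S)"
proof -
  obtain c where c: "\<forall>s\<in>S. c s \<in> K" "u = (\<Sum>s\<in>S. c s * s)"
    using assms(3) unfolding span_over_def by blast
  have "(\<Sum>s\<in>S. (c(v := k)) s * s) = (\<Sum>s\<in>S. c s * s)"
    using assms(2) by (intro sum.cong) auto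
  then have "u + k * v = (\<Sum>s\<in>insert v S. (c(v := k)) s * s)"
    using assms(1,2) c(2) by (simp add: add.commute)
  then show ?thesis
    unfolding span_over_def using c(1) assms(4) by (intro CollectI exI[of _ "c(v := k)"]) auto
qed

lemma mem_span_over:
  assumes "finite S" and "s \<in> S"
  shows "s \<in> span_over K S"
proof -
  have "(\<Sum>s'\<in>S. (if s' = s then 1 else 0) * s') = (\<Sum>s'\<in>S. if s' = s then s' else 0)"
    by (rule sum.cong) auto
  also have "\<dots> = s"
    using assms by simp
  finally show ?thesis
    unfolding span_over_def using zero_mem one_mem
    by (intro CollectI exI[of _ "\<lambda>s'. if s' = s then 1 else 0"]) auto
qed

lemma card_span_over_insert:
  assumes "finite S" and "v \<notin> span_over K S"
  shows "card K * card (span_over K S) \<le> card (span_over K (insert v S))"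
proof -
  let ?f = "\<lambda>(u, k). u + k * v"
  have "v \<notin> S"
    using assms mem_span_over by blast
  have "inj_on ?f (span_over K S \<times> K)"
  proof (rule inj_onI, clarify)
    fix u k u' k'
    assume mem: "u \<in> span_over K S" "k \<in> K" "u' \<in> span_over K S" "k' \<in> K"
      and eq: "u + k * v = u' + k' * v"
    show "u = u' \<and> k = k'"
    proof (cases "k = k'")
      case False
      then have "v = inverse (k' - k) * (u - u')"
        using eq by (simp add: field_simps)
      then have "v \<in> span_over K S"
        using mem by (simp add: span_over_scale span_over_diff inverse_mem diff_mem)
      with assms(2) show ?thesis
        by blast
    qed (use eq in simp)
  qed
  moreover have "?f ` (span_over K S \<times> K) \<subseteq> span_over K (insert v S)"
    using span_over_insert[OF assms(1) \<open>v \<notin> S\<close>] by auto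
  ultimately have "card (span_over K S \<times> K) \<le> card (span_over K (insert v S))"
    using card_mono[OF finite] card_image by metis
  then show ?thesis
    by (simp add: card_cartesian_product mult.commute)
qed

lemma span_over_subset:
  assumes "finite S" and "S \<subseteq> V" and "0 \<in> V"
    and "\<And>x y. x \<in> V \<Longrightarrow> y \<in> V \<Longrightarrow> x + y \<in> V"
    and "\<And>k x. k \<in> K \<Longrightarrow> x \<in> V \<Longrightarrow> k * x \<in> V"
  shows "span_over K S \<subseteq> V"
proof
  fix u
  assume "u \<in> span_over K S"
  then obtain c where c: "\<forall>s\<in>S. c s \<in> K" "u = (\<Sum>s\<in>S. c s * s)"
    unfolding span_over_def by blast
  have "(\<Sum>s\<in>S. c s * s) \<in> V"
    using assms(1,2) c(1) by (induction S rule: finite_induct) (auto intro!: assms(4,5) simp: assms(3))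
  then show "u \<in> V"
    using c(2) by simp
qed

text \<open>Greedily adjoin vectors outside the current span: each step multiplies the size of the
  span by at least \<open>card K\<close>.\<close>

lemma greedy_span_over:
  "\<exists>S. finite S \<and> S \<subseteq> V \<and> card S \<le> t \<and> card K ^ card S \<le> card (span_over K S)
     \<and> (V \<subseteq> span_over K S \<or> card S = t)"
proof (induction t)
  case 0
  have "span_over K {} = {0}"
    by (simp add: span_over_def)
  then show ?case
    by (intro exI[of _ "{}"]) simp
next
  case (Suc t)
  then obtain S where S: "finite S" "S \<subseteq> V" "card S \<le> t"
    "card K ^ card S \<le> card (span_over K S)" "V \<subseteq> span_over K S \<or> card S = t"
    by blast
  show ?case
  proof (cases "V \<subseteq> span_over K S")
    case False
    then obtain v where v: "v \<in> V" "v \<notin> span_over K S"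
      by blast
    then have "v \<notin> S"
      using mem_span_over S(1) by blast
    have "card K ^ Suc (card S) \<le> card K * card (span_over K S)"
      using S(4) by simp
    also have "\<dots> \<le> card (span_over K (insert v S))"
      using card_span_over_insert[OF S(1) v(2)] .
    finally have "card K ^ card (insert v S) \<le> card (span_over K (insert v S))"
      using S(1) \<open>v \<notin> S\<close> by simp
    moreover have "card (insert v S) = Suc t"
      using S(1,5) False \<open>v \<notin> S\<close> by simp
    ultimately show ?thesis
      using S(1,2) v(1) by (intro exI[of _ "insert v S"]) simp
  qed (use S in \<open>intro exI[of _ S]\<close>, simp)
qed

lemma dim_over_le_if_card_le:
  assumes "0 \<in> V" and add_closed: "\<And>x y. x \<in> V \<Longrightarrow> y \<in> V \<Longrightarrow> x + y \<in> V"
    and scale_closed: "\<And>k x. k \<in> K \<Longrightarrow> x \<in> V \<Longrightarrow> k * x \<in> V"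
    and card_V: "card V \<le> card K ^ r"
  shows "dim_over K V \<le> r"
proof -
  obtain S where S: "finite S" "S \<subseteq> V" "card S \<le> r"
    "card K ^ card S \<le> card (span_over K S)" "V \<subseteq> span_over K S \<or> card S = r"
    using greedy_span_over[of V r] by blast
  have span_sub: "span_over K S \<subseteq> V"
    using span_over_subset[OF S(1,2) assms(1) add_closed scale_closed] .
  have "V \<subseteq> span_over K S"
  proof (cases "card S = r")
    case True
    then have "card V \<le> card (span_over K S)"
      using card_V S(4) by simp
    then have "span_over K S = V"
      using card_subset_eq[OF finite span_sub] card_mono[OF finite span_sub] by linarith
    then show ?thesis
      by simp
  qed (use S(5) in simp)
  then have "dim_over K V \<le> card S"
    unfolding dim_over_def using S(1,2) by (intro Least_le) blast
  then show ?thesis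
    using S(3) by simp
qed

end

lemma subfield_set_subfield_elems:
  assumes "(2::'a::{field,finite}) = 0"
  shows "subfield_set (subfield_elems t :: 'a set)"
proof
  show "a - b \<in> subfield_elems t" if "a \<in> subfield_elems t" "b \<in> subfield_elems t" for a b :: 'a
    using that frob_diff[OF assms, of t a b] by (simp add: subfield_elems_def frob_def)
qed (simp_all add: subfield_elems_def power_mult_distrib power_inverse)

section \<open>The radical of the bilinear form\<close>

lemma sum_atMost_double_split:
  fixes f :: "nat \<Rightarrow> 'a::comm_monoid_add"
  shows "(\<Sum>i\<le>2 * p. f i) = f p + (\<Sum>j\<in>{1..p}. f (p - j) + f (p + j))"
proof -
  have "{..2 * p} = {..<p} \<union> {p..p + p}"
    by auto
  then have "(\<Sum>i\<le>2 * p. f i) = (\<Sum>i<p. f i) + (\<Sum>i\<in>{p..p + p}. f i)"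
    by (simp add: sum.union_disjoint ivl_disj_int)
  also have "(\<Sum>i\<in>{p..p + p}. f i) = f p + (\<Sum>i\<in>{Suc p..p + p}. f i)"
    by (simp add: sum.atLeast_Suc_atMost)
  also have "(\<Sum>i<p. f i) = (\<Sum>j\<in>{1..p}. f (p - j))"
    by (simp add: sum.atLeast1_atMost_eq flip: sum.nat_diff_reindex[of f p])
  also have "(\<Sum>i\<in>{Suc p..p + p}. f i) = (\<Sum>j\<in>{1..p}. f (p + j))"
    using sum.shift_bounds_cl_nat_ivl[of f 1 p p] by (simp add: add.commute)
  finally show ?thesis
    by (simp add: sum.distrib ac_simps)
qed

lemma odd_div_gcd_if_gcd_double:
  fixes n d :: nat
  assumes "0 < d" and "gcd (2 * n) d = gcd n d"
  shows "odd (d div gcd n d)"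
proof
  define g where "g = gcd n d"
  assume "even (d div g)"
  obtain n' d' where nd: "n = g * n'" "d = g * d'"
    unfolding g_def by (meson dvdE gcd_dvd1 gcd_dvd2)
  have g_pos: "0 < g"
    using assms(1) by (simp add: g_def)
  have "g * gcd (2 * n') d' = gcd (2 * n) d"
    by (simp add: nd gcd_mult_distrib_nat mult.left_commute)
  also have "\<dots> = g * 1"
    using assms(2) by (simp add: g_def)
  finally have "gcd (2 * n') d' = 1"
    using g_pos by simp
  moreover have "even d'"
    using \<open>even (d div g)\<close> nd(2) g_pos by simp
  then have "2 dvd gcd (2 * n') d'"
    by (simp add: gcd_greatest)
  ultimately show False
    by simp
qed

context
  fixes m n d e :: nat
  assumes card_UNIV: "card (UNIV :: 'a::{field,finite} set) = 2 ^ m" and char2: "(2::'a) = 0"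
    and n_pos: "0 < n" and d_pos: "0 < d" and m_eq: "m = 2 * n"
    and e_gcd_n: "e = gcd n d" and e_gcd_m: "e = gcd m d"
begin

lemma e_pos: "0 < e"
  and e_dvd_n: "e dvd n" and e_dvd_d: "e dvd d" and e_dvd_m: "e dvd m"
  using d_pos unfolding e_gcd_n by (simp_all add: m_eq)

lemma d_mult_n_div_e: "d * (n div e) = n * (d div e)"
  using e_dvd_n e_dvd_d by auto

lemma frob_m_eq: "frob m (x::'a) = x"
  using frob_eq_self_if_card_eq[OF card_UNIV] .

text \<open>\<open>d / e\<close> is odd since \<open>gcd n d = gcd (2 n) d\<close>, so \<open>n (d / e) \<equiv> n (mod m)\<close>.\<close>

lemma frob_n_mult_d_div_e: "frob (n * (d div e)) (x::'a) = frob n x"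
proof -
  obtain q where "d div e = 2 * q + 1"
    using odd_div_gcd_if_gcd_double[OF d_pos] e_gcd_n e_gcd_m m_eq oddE by metis
  then have "n * (d div e) = n + m * q"
    using m_eq by simp
  then show ?thesis
    using frob_fixed_mult[OF frob_m_eq] by (simp add: frob_frob[symmetric])
qed

lemma frob_e_fixed_if_frob_d_fixed: "frob d (y::'a) = y \<Longrightarrow> frob e y = y"
  using frob_fixed_gcd[of d y m] d_pos frob_m_eq e_gcd_m by (simp add: gcd.commute)

definition adjoint_map :: "nat \<Rightarrow> (nat \<Rightarrow> 'a) \<Rightarrow> 'a \<Rightarrow> 'a" where
  "adjoint_map k a x = a 0 * frob n x
     + (\<Sum>j\<in>{1..<k}. frob (d * (n div e + j)) (a j * x) + a j * frob (d * (n div e - j)) x)"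

lemma rel_trace_conj_term:
  assumes "frob n (a0::'a) = a0"
  shows "rel_trace n e (a0 * (x * frob n y + frob n x * y)) = rel_trace m e (a0 * frob n x * y)"
proof -
  have "frob n (a0 * frob n x * y) = a0 * x * frob n y"
    using assms frob_m_eq by (simp add: frob_mult frob_frob m_eq mult_2)
  then show ?thesis
    using rel_trace_double[OF char2 e_dvd_n, of "a0 * frob n x * y"] by (simp add: m_eq algebra_simps)
qed

lemma rel_trace_twisted_term:
  fixes b :: 'a
  assumes "j \<le> n div e"
  shows "rel_trace m e (b * (x * frob (d * (n div e - j)) y + frob (d * (n div e - j)) x * y))
    = rel_trace m e (frob (d * (n div e + j)) (b * x) * y)
      + rel_trace m e (b * frob (d * (n div e - j)) x * y)"
proof -
  have "d * (n div e + j) + d * (n div e - j) = 2 * (d * (n div e))"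
    using assms by (simp flip: distrib_left)
  also have "\<dots> = m * (d div e)"
    using d_mult_n_div_e m_eq by simp
  finally have "d * (n div e + j) + d * (n div e - j) = m * (d div e)" .
  then have "m dvd d * (n div e + j) + d * (n div e - j)"
    by simp
  then have "rel_trace m e (b * x * frob (d * (n div e - j)) y)
      = rel_trace m e (frob (d * (n div e + j)) (b * x) * y)"
    using e_dvd_d by (intro rel_trace_frob_adjoint[OF card_UNIV e_dvd_m]) simp_all
  then show ?thesis
    by (simp add: distrib_left rel_trace_add[OF char2] mult.assoc)
qed

lemma Bform_eq_rel_trace_adjoint_map:
  assumes "k \<le> n div e" and "frob n (a 0) = a 0"
  shows "Bform m n d e k a x y = rel_trace m e (adjoint_map k a x * y)"
proof -
  have "n * d div e = n * (d div e)"
    using e_dvd_d by (simp add: div_mult_swap)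
  then have "u ^ 2 ^ (n * d div e) = frob n u" for u :: 'a
    using frob_n_mult_d_div_e by (simp add: frob_def)
  moreover have "u ^ 2 ^ ((n div e - j) * d) = frob (d * (n div e - j)) u" for u :: 'a and j
    by (simp add: frob_def mult.commute)
  ultimately have "Bform m n d e k a x y = rel_trace m e (a 0 * frob n x * y)
      + (\<Sum>j\<in>{1..<k}. rel_trace m e (frob (d * (n div e + j)) (a j * x) * y)
                        + rel_trace m e (a j * frob (d * (n div e - j)) x * y))"
    using assms by (simp add: Bform_def rel_trace_conj_term rel_trace_twisted_term)
  then show ?thesis
    by (simp add: adjoint_map_def distrib_right sum_distrib_right rel_trace_add[OF char2]
        rel_trace_sum[OF char2] mult.assoc)
qed

lemma Rad_Bform_eq_kernel:
  fixes a :: "nat \<Rightarrow> 'a"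
  assumes "k \<le> n div e" and "frob n (a 0) = a 0"
  shows "Rad (Bform m n d e k a) = {x. adjoint_map k a x = 0}"
proof -
  have "0 < m"
    using n_pos m_eq by simp
  then show ?thesis
    unfolding Rad_def Bform_eq_rel_trace_adjoint_map[where a = a, OF assms]
    using rel_trace_nondegenerate[OF card_UNIV e_dvd_m e_pos] by fastforce
qed

lemma adjoint_map_zero: "adjoint_map k a 0 = 0"
  by (simp add: adjoint_map_def)

lemma adjoint_map_add: "adjoint_map k a (x + y) = adjoint_map k a x + adjoint_map k a y"
  by (simp add: adjoint_map_def frob_add[OF char2] frob_mult sum.distrib algebra_simps)

lemma adjoint_map_scale:
  assumes "c \<in> subfield_elems e"
  shows "adjoint_map k a (c * x) = c * adjoint_map k a x"
proof -
  have "frob t c = c" if "e dvd t" for t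
    using assms that frob_fixed_dvd[of e c t] by (simp add: subfield_elems_def frob_def)
  then have fixed_n: "frob n c = c" and fixed_d: "frob (d * t) c = c" for t
    using e_dvd_n e_dvd_d by simp_all
  show ?thesis
    unfolding adjoint_map_def frob_mult fixed_n fixed_d
    by (simp add: distrib_left sum_distrib_left mult_ac)
qed

text \<open>Coefficients of the adjoint map as a linearized polynomial of degree \<open>2 (k - 1)\<close> in
  \<open>frob d\<close>, evaluated at \<open>frob (d * (n div e - (k - 1))) x\<close>; \<open>a j\<close> sits at position
  \<open>k - 1 - j\<close>.\<close>

definition adjoint_coeff :: "nat \<Rightarrow> (nat \<Rightarrow> 'a) \<Rightarrow> nat \<Rightarrow> 'a" where
  "adjoint_coeff k a i =
     (if i < k - 1 then a (k - 1 - i)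
      else if i = k - 1 then a 0
      else frob (d * (n div e + (i - (k - 1)))) (a (i - (k - 1))))"

lemma adjoint_coeff_middle: "adjoint_coeff k a (k - 1) = a 0"
  and adjoint_coeff_below: "j \<in> {1..k - 1} \<Longrightarrow> adjoint_coeff k a (k - 1 - j) = a j"
  and adjoint_coeff_above: "1 \<le> j \<Longrightarrow> adjoint_coeff k a (k - 1 + j) = frob (d * (n div e + j)) (a j)"
  by (auto simp: adjoint_coeff_def)

lemma adjoint_map_eq_frob_poly:
  assumes "1 \<le> k" and "k \<le> n div e"
  shows "adjoint_map k a x
    = frob_poly d (2 * (k - 1)) (adjoint_coeff k a) (frob (d * (n div e - (k - 1))) x)"
proof -
  let ?p = "k - 1" and ?c = "adjoint_coeff k a"
  let ?G = "\<lambda>i. frob (d * i) (frob (d * (n div e - ?p)) x)"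
  have G: "?G i = frob (d * (i + (n div e - ?p))) x" for i
    by (simp add: frob_frob distrib_left)
  have middle: "?c ?p * ?G ?p = a 0 * frob n x"
  proof -
    have "?p + (n div e - ?p) = n div e"
      using assms by simp
    then show ?thesis
      by (simp only: G d_mult_n_div_e frob_n_mult_d_div_e adjoint_coeff_middle)
  qed
  have pair: "?c (?p - j) * ?G (?p - j) + ?c (?p + j) * ?G (?p + j)
      = frob (d * (n div e + j)) (a j * x) + a j * frob (d * (n div e - j)) x"
    if "j \<in> {1..?p}" for j
  proof -
    have "?p - j + (n div e - ?p) = n div e - j" and "?p + j + (n div e - ?p) = n div e + j"
      and "1 \<le> j"
      using that assms by auto
    then show ?thesis
      by (simp only: G adjoint_coeff_below[OF that] adjoint_coeff_above frob_mult) (simp add: ac_simps)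
  qed
  have "{1..<k} = {1..?p}"
    using assms(1) by auto
  then show ?thesis
    unfolding frob_poly_def sum_atMost_double_split adjoint_map_def middle
    using pair by simp
qed

lemma adjoint_coeff_nonzero:
  assumes "a 0 \<noteq> 0 \<or> (\<exists>j\<in>{1..<k}. a j \<noteq> 0)"
  shows "\<exists>i\<le>2 * (k - 1). adjoint_coeff k a i \<noteq> 0"
  using assms
proof
  assume "a 0 \<noteq> 0"
  then show ?thesis
    using adjoint_coeff_middle by (intro exI[of _ "k - 1"]) simp
next
  assume "\<exists>j\<in>{1..<k}. a j \<noteq> 0"
  then obtain j where j: "j \<in> {1..<k}" and "a j \<noteq> 0"
    by blast
  moreover from j have "j \<in> {1..k - 1}"
    by auto
  ultimately show ?thesis
    using adjoint_coeff_below by (intro exI[of _ "k - 1 - j"]) simp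
qed

lemma card_Rad_Bform_le:
  fixes a :: "nat \<Rightarrow> 'a"
  assumes "1 \<le> k" and "k \<le> n div e" and "frob n (a 0) = a 0"
    and "a 0 \<noteq> 0 \<or> (\<exists>j\<in>{1..<k}. a j \<noteq> 0)"
  shows "card (Rad (Bform m n d e k a)) \<le> card (subfield_elems e :: 'a set) ^ (2 * (k - 1))"
proof -
  let ?shift = "frob (d * (n div e - (k - 1))) :: 'a \<Rightarrow> 'a"
  let ?P = "frob_poly d (2 * (k - 1)) (adjoint_coeff k a)"
  have "inj_on ?shift {x. adjoint_map k a x = 0}"
    by (auto intro: inj_onI frob_inj[OF char2])
  then have "card {x. adjoint_map k a x = 0} \<le> card {w. ?P w = 0}"
    by (rule card_inj_on_le) (auto simp: adjoint_map_eq_frob_poly[OF assms(1,2)])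
  also have "\<dots> \<le> card (subfield_elems e :: 'a set) ^ (2 * (k - 1))"
  proof (rule card_frob_poly_roots_le[OF char2])
    show "y \<in> subfield_elems e" if "frob d y = y" for y :: 'a
      using frob_e_fixed_if_frob_d_fixed[OF that] by (simp add: subfield_elems_def frob_def)
  qed (rule adjoint_coeff_nonzero[OF assms(4)])
  finally show ?thesis
    using Rad_Bform_eq_kernel[where a = a, OF assms(2,3)] by simp
qed

lemma rk_over_Bform_ge:
  fixes a :: "nat \<Rightarrow> 'a"
  assumes "1 \<le> k" and "k \<le> n div e" and "frob n (a 0) = a 0"
    and "a 0 \<noteq> 0 \<or> (\<exists>j\<in>{1..<k}. a j \<noteq> 0)"
  shows "rk_over m e (Bform m n d e k a) \<ge> m div e - 2 * (k - 1)"
proof -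
  interpret subfield_set "subfield_elems e :: 'a set"
    by (rule subfield_set_subfield_elems[OF char2])
  have "dim_over (subfield_elems e) (Rad (Bform m n d e k a)) \<le> 2 * (k - 1)"
    using Rad_Bform_eq_kernel[where a = a, OF assms(2,3)]
      adjoint_map_zero adjoint_map_add adjoint_map_scale
    by (intro dim_over_le_if_card_le card_Rad_Bform_le[OF assms]) simp_all
  then show ?thesis
    unfolding rk_over_def by (rule diff_le_mono2)
qed

end

theorem theorem2p1:
  fixes m n d e k :: nat and a :: "nat \<Rightarrow> 'a::{field,finite}"
  assumes "card (UNIV :: 'a set) = 2 ^ m" and "(2::'a) = 0"
    and "n > 0" and "d > 0" and "m = 2 * n"
    and "e = gcd n d" and "e = gcd m d"
    and "1 \<le> k" and "k \<le> n div e"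
    and "a 0 \<in> subfield_elems n"
    and "a 0 \<noteq> 0 \<or> (\<exists>j\<in>{1..<k}. a j \<noteq> 0)"
  shows "rk_over m e (Bform m n d e k a) \<ge> m div e - 2 * (k - 1)"
proof -
  have "frob n (a 0) = a 0"
    using assms(10) by (simp add: subfield_elems_def frob_def)
  then show ?thesis
    by (rule rk_over_Bform_ge[OF assms(1-9) _ assms(11)])
qed

end
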